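(* Let $v\equiv 1$ or $7\pmod{24}$ and $n=\frac{v-1}{6}$. If a cyclic four-fold triple system CTS$(v,4)$ has fine structure $(c_1,c_2,c_3,c_4)$ with $c_2=t$, $c_3=s$, $c_4=u$, then $0\le u\le n$, $0\le s\le n-u$ and $0\le t\le 2n-2u-2s$.
   Context: A cyclic $\lambda$-fold triple system CTS$(v,\lambda)$ is a multiset $\mathcal B$ of 3-element subsets (blocks) of $\mathbb Z_v$ such that every 2-element subset of $\mathbb Z_v$ is contained in exactly $\lambda$ blocks (counted with multiplicity), and $\mathcal B$ is invariant under the translation $x\mapsto x+1$. Thus $\mathcal B$ is a union of translation orbits of 3-subsets with multiplicities; a base block is an orbit representative. The fine structure is $(c_1,\ldots,c_\lambda)$, where $c_i$ is the number of distinct base blocks (orbits) occurring with multiplicity exactly $i$. *)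

theory Defs
  imports "HOL-Library.Multiset"
begin

text \<open>Elements of Z_v are represented by naturals in {..<v}; blocks are 3-element
  subsets of {..<v}; a triple system is a multiset of blocks.\<close>

definition shift :: "nat \<Rightarrow> nat \<Rightarrow> nat set \<Rightarrow> nat set" where
  "shift v k b = (\<lambda>x. (x + k) mod v) ` b"

definition is_CTS :: "nat \<Rightarrow> nat \<Rightarrow> nat set multiset \<Rightarrow> bool" where
  "is_CTS v lam B \<longleftrightarrow>
     (\<forall>b \<in># B. b \<subseteq> {..<v} \<and> card b = 3) \<and>
     image_mset (shift v 1) B = B \<and>
     (\<forall>x < v. \<forall>y < v. x \<noteq> y \<longrightarrow> size (filter_mset (\<lambda>b. {x, y} \<subseteq> b) B) = lam)"

definition orbit :: "nat \<Rightarrow> nat set \<Rightarrow> nat set set" where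
  "orbit v b = {shift v k b | k. k < v}"

definition fine_c :: "nat \<Rightarrow> nat set multiset \<Rightarrow> nat \<Rightarrow> nat" where
  "fine_c v B i = card {orbit v b | b. b \<in># B \<and> count B b = i}"

end

theory Submission
  imports Defs "HOL-Number_Theory.Cong"
begin

text \<open>Give every block through the point 0 the weight min 2 (m - 1), where m is its
  multiplicity: base blocks of multiplicity 2 weigh 1, those of multiplicity 3 or 4 weigh 2.
  Since 3 is prime to v, no block is fixed by a nontrivial translation, so every orbit contains
  exactly three blocks through 0 and the total weight is 3(t + 2s + 2u). On the other hand, for
  each y \<noteq> 0 the multiplicities of the blocks through {0, y} add up to \<lambda> = 4, which bounds
  their total weight by 2; counting the pairs (b, y) with y \<in> b - {0} bounds the total weight
  by v - 1 = 6n. Hence t + 2s + 2u \<le> 2n, which contains all three inequalities.\<close>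

lemma shift_shift: "shift v j (shift v k b) = shift v (j + k) b"
  unfolding shift_def image_image by (intro image_cong) (auto simp: mod_add_right_eq ac_simps)

lemma shift_mod: "shift v (k mod v) b = shift v k b"
  unfolding shift_def by (intro image_cong) (auto simp: mod_add_right_eq)

lemma shift_eq_self_if_dvd:
  assumes "b \<subseteq> {..<v}" "v dvd k"
  shows "shift v k b = b"
proof -
  have "(x + k) mod v = x" if "x \<in> b" for x
    using mod_add_right_eq[of x k v] assms that by auto
  then show ?thesis unfolding shift_def by simp
qed

lemma shift_inverse:
  assumes "b \<subseteq> {..<v}"
  shows "shift v (v - k mod v) (shift v k b) = b"
proof (cases "v = 0")
  case True
  then show ?thesis using assms by (simp add: shift_def)
next
  case False
  have "(v - k mod v + k) mod v = (v - k mod v + k mod v) mod v"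
    by (simp add: mod_add_right_eq)
  also have "\<dots> = 0"
    using False by (simp add: le_add_diff_inverse2 less_imp_le)
  finally have "v dvd v - k mod v + k" by (simp add: dvd_eq_mod_eq_0)
  with assms show ?thesis unfolding shift_shift by (rule shift_eq_self_if_dvd)
qed

lemma inj_on_add_mod:
  fixes v k :: nat
  assumes "b \<subseteq> {..<v}"
  shows "inj_on (\<lambda>x. (x + k) mod v) b"
proof
  fix x y assume "x \<in> b" "y \<in> b" "(x + k) mod v = (y + k) mod v"
  then show "x = y"
    using assms cong_less_modulus_unique_nat[of x y v]
    by (auto simp: cong_def[symmetric] cong_add_rcancel_nat)
qed

lemma sum_shift_cong:
  assumes "b \<subseteq> {..<v}"
  shows "[\<Sum>(shift v k b) = \<Sum>b + card b * k] (mod v)"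
proof -
  have "\<Sum>(shift v k b) = (\<Sum>x\<in>b. (x + k) mod v)"
    unfolding shift_def using inj_on_add_mod[OF assms] by (simp add: sum.reindex)
  also have "[\<dots> = (\<Sum>x\<in>b. x + k)] (mod v)"
    by (simp add: cong_def mod_sum_eq)
  also have "(\<Sum>x\<in>b. x + k) = \<Sum>b + card b * k"
    by (simp add: sum.distrib)
  finally show ?thesis .
qed

lemma shift_eq_imp_cong:
  assumes "b \<subseteq> {..<v}" "coprime v (card b)" "shift v j b = shift v k b"
  shows "[j = k] (mod v)"
proof -
  have "[\<Sum>b + card b * j = \<Sum>b + card b * k] (mod v)"
    using sum_shift_cong[OF assms(1), of j] sum_shift_cong[OF assms(1), of k] assms(3)
    by (metis cong_sym cong_trans)
  then show ?thesis
    using assms(2) by (simp add: cong_add_lcancel_nat cong_mult_lcancel_nat coprime_commute)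
qed

lemma inj_on_shift:
  assumes "b \<subseteq> {..<v}" "coprime v (card b)"
  shows "inj_on (\<lambda>k. shift v k b) {..<v}"
  using shift_eq_imp_cong[OF assms] cong_less_modulus_unique_nat
  by (intro inj_onI) (simp, blast)

lemma orbit_eq_range: "0 < v \<Longrightarrow> orbit v b = range (\<lambda>k. shift v k b)"
  unfolding orbit_def by (auto, metis mod_less_divisor shift_mod)

lemma self_mem_orbit: "0 < v \<Longrightarrow> b \<subseteq> {..<v} \<Longrightarrow> b \<in> orbit v b"
  unfolding orbit_def using shift_eq_self_if_dvd[of b v 0] by force

lemma orbit_subset_if_mem:
  assumes "c \<in> orbit v b"
  shows "orbit v c \<subseteq> orbit v b"
proof -
  obtain k where "k < v" "c = shift v k b"
    using assms unfolding orbit_def by auto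
  then show ?thesis by (auto simp: orbit_eq_range shift_shift)
qed

lemma orbit_eq_if_mem:
  assumes "b \<subseteq> {..<v}" "c \<in> orbit v b"
  shows "orbit v c = orbit v b"
proof
  obtain k where k: "k < v" "c = shift v k b"
    using assms(2) unfolding orbit_def by auto
  then have "b \<in> orbit v c"
    using shift_inverse[OF assms(1), of k] by (auto simp: orbit_eq_range)
  then show "orbit v b \<subseteq> orbit v c" by (rule orbit_subset_if_mem)
qed (rule orbit_subset_if_mem[OF assms(2)])

lemma add_mod_eq_0_iff:
  fixes x k v :: nat
  assumes "x < v" "k < v"
  shows "(x + k) mod v = 0 \<longleftrightarrow> k = (v - x) mod v"
  using assms by (auto simp: mod_if)

lemma card_orbit_containing_0:
  assumes b: "b \<subseteq> {..<v}" and cop: "coprime v (card b)"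
  shows "card {c \<in> orbit v b. 0 \<in> c} = card b"
proof -
  define neg where "neg x = (v - x) mod v" for x
  have "0 \<in> shift v k b \<longleftrightarrow> (\<exists>x\<in>b. k = neg x)" if "k < v" for k
  proof -
    have "0 \<in> shift v k b \<longleftrightarrow> (\<exists>x\<in>b. (x + k) mod v = 0)"
      unfolding shift_def image_iff by (metis (no_types, lifting))
    also have "\<dots> \<longleftrightarrow> (\<exists>x\<in>b. k = neg x)"
      unfolding neg_def using b that by (intro bex_cong refl add_mod_eq_0_iff) auto
    finally show ?thesis .
  qed
  moreover have neg_less: "neg x < v" if "x \<in> b" for x
    using b that unfolding neg_def by auto
  ultimately have shifts_to_0: "{k \<in> {..<v}. 0 \<in> shift v k b} = neg ` b"
    by auto
  have "neg (neg x) = x" if "x < v" for x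
    using that unfolding neg_def by (auto simp: mod_if)
  then have "inj_on neg b"
    using b by (metis inj_on_inverseI subset_eq lessThan_iff)
  moreover have "inj_on (\<lambda>k. shift v k b) (neg ` b)"
    by (rule inj_on_subset[OF inj_on_shift[OF assms]]) (use neg_less in auto)
  moreover have "{c \<in> orbit v b. 0 \<in> c} = (\<lambda>k. shift v k b) ` neg ` b"
    unfolding orbit_def shifts_to_0[symmetric] by auto
  ultimately show ?thesis by (simp add: card_image)
qed

lemma is_CTS_image_mset_shift:
  assumes "is_CTS v lam B"
  shows "image_mset (shift v k) B = B"
proof (induction k)
  case 0
  have "image_mset (shift v 0) B = image_mset id B"
    using assms unfolding is_CTS_def by (intro image_mset_cong) (simp add: shift_eq_self_if_dvd)
  then show ?case by simp
next
  case (Suc k)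
  have "image_mset (shift v (Suc k)) B = image_mset (shift v 1) (image_mset (shift v k) B)"
    by (simp add: multiset.map_comp comp_def shift_shift)
  also have "\<dots> = B"
    using Suc assms unfolding is_CTS_def by simp
  finally show ?case .
qed

lemma count_le_count_image_mset: "count M x \<le> count (image_mset f M) (f x)"
  by (cases "x \<in># M") (auto simp: count_image_mset not_in_iff intro: member_le_sum)

lemma is_CTS_count_shift:
  assumes "is_CTS v lam B" "c \<subseteq> {..<v}"
  shows "count B (shift v k c) = count B c"
proof (rule antisym)
  have "count B (shift v k c) \<le> count B (shift v (v - k mod v) (shift v k c))"
    by (metis count_le_count_image_mset is_CTS_image_mset_shift[OF assms(1)])
  then show "count B (shift v k c) \<le> count B c"
    by (simp only: shift_inverse[OF assms(2)])
  show "count B c \<le> count B (shift v k c)"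
    by (metis count_le_count_image_mset is_CTS_image_mset_shift[OF assms(1)])
qed

lemma is_CTS_count_le:
  assumes "is_CTS v lam B" "b \<in># B"
  shows "count B b \<le> lam"
proof -
  have "b \<subseteq> {..<v}" "card b = 3"
    using assms unfolding is_CTS_def by auto
  then obtain x y where xy: "x \<in> b" "y \<in> b" "x \<noteq> y" "x < v" "y < v"
    by (auto simp: card_3_iff)
  have "count B b = count (filter_mset (\<lambda>c. {x, y} \<subseteq> c) B) b"
    using xy by simp
  also have "\<dots> \<le> size (filter_mset (\<lambda>c. {x, y} \<subseteq> c) B)"
    by (rule count_le_size)
  also have "\<dots> = lam"
    using assms(1) xy unfolding is_CTS_def by blast
  finally show ?thesis .
qed

lemma finite_orbit: "finite (orbit v b)"
  unfolding orbit_def by simp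

lemma orbits_disjoint:
  assumes "b \<subseteq> {..<v}" "b' \<subseteq> {..<v}" "orbit v b \<noteq> orbit v b'"
  shows "orbit v b \<inter> orbit v b' = {}"
proof -
  have "orbit v b = orbit v b'" if "c \<in> orbit v b" "c \<in> orbit v b'" for c
    using orbit_eq_if_mem[OF assms(1) that(1)] orbit_eq_if_mem[OF assms(2) that(2)] by simp
  then show ?thesis
    using assms(3) by blast
qed

lemma is_CTS_count_class_eq_UN_orbit:
  assumes CTS: "is_CTS v lam B" and "0 < i"
  shows "(\<Union>b \<in> {b \<in> set_mset B. count B b = i}. orbit v b) = {b \<in> set_mset B. count B b = i}"
proof (intro equalityI subsetI)
  fix c assume "c \<in> (\<Union>b \<in> {b \<in> set_mset B. count B b = i}. orbit v b)"
  then obtain b k where "b \<in># B" "count B b = i" "c = shift v k b"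
    unfolding orbit_def by auto
  then have "count B c = i"
    using is_CTS_count_shift[OF CTS] CTS unfolding is_CTS_def by simp
  moreover from this have "c \<in># B"
    using \<open>0 < i\<close> by (metis count_greater_zero_iff)
  ultimately show "c \<in> {b \<in> set_mset B. count B b = i}"
    by simp
next
  fix b assume "b \<in> {b \<in> set_mset B. count B b = i}"
  moreover have "b \<subseteq> {..<v}" "b \<noteq> {}"
    using CTS calculation unfolding is_CTS_def by auto
  moreover from this have "0 < v"
    by (auto simp: subset_iff)
  ultimately show "b \<in> (\<Union>b \<in> {b \<in> set_mset B. count B b = i}. orbit v b)"
    using self_mem_orbit by blast
qed

lemma card_blocks_containing_0:
  assumes CTS: "is_CTS v lam B" and cop: "coprime v 3" and "0 < i"
  shows "card {b \<in> set_mset B. 0 \<in> b \<and> count B b = i} = 3 * fine_c v B i"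
proof -
  have blocks: "b \<subseteq> {..<v}" "card b = 3" if "b \<in># B" for b
    using CTS that unfolding is_CTS_def by auto
  define Orbs where "Orbs = orbit v ` {b \<in> set_mset B. count B b = i}"
  have "{b \<in> set_mset B. 0 \<in> b \<and> count B b = i} = (\<Union>X\<in>Orbs. {c \<in> X. 0 \<in> c})"
    using is_CTS_count_class_eq_UN_orbit[OF CTS \<open>0 < i\<close>] unfolding Orbs_def by blast
  also have "card (\<Union>X\<in>Orbs. {c \<in> X. 0 \<in> c}) = (\<Sum>X\<in>Orbs. card {c \<in> X. 0 \<in> c})"
  proof (intro card_UN_disjoint ballI impI)
    show "finite Orbs"
      unfolding Orbs_def by simp
    show "finite {c \<in> X. 0 \<in> c}" if "X \<in> Orbs" for X
      using that finite_orbit unfolding Orbs_def by auto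
    show "{c \<in> X. 0 \<in> c} \<inter> {c \<in> Y. 0 \<in> c} = {}" if XY: "X \<in> Orbs" "Y \<in> Orbs" "X \<noteq> Y" for X Y
    proof -
      obtain b b' where "b \<in># B" "b' \<in># B" "X = orbit v b" "Y = orbit v b'"
        using XY unfolding Orbs_def by auto
      then have "X \<inter> Y = {}"
        using blocks orbits_disjoint \<open>X \<noteq> Y\<close> by metis
      then show ?thesis by blast
    qed
  qed
  also have "\<dots> = (\<Sum>X\<in>Orbs. 3)"
  proof (rule sum.cong)
    fix X assume "X \<in> Orbs"
    then obtain b where "b \<in># B" "X = orbit v b"
      unfolding Orbs_def by auto
    then show "card {c \<in> X. 0 \<in> c} = 3"
      using blocks card_orbit_containing_0 cop by metis
  qed simp
  also have "Orbs = {orbit v b | b. b \<in># B \<and> count B b = i}"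
    unfolding Orbs_def by auto
  finally show ?thesis
    unfolding fine_c_def by simp
qed

lemma sum_min_2_pred_le_2:
  fixes m :: "'a \<Rightarrow> nat"
  assumes "finite W" "\<And>b. b \<in> W \<Longrightarrow> 0 < m b" "sum m W \<le> 4"
  shows "(\<Sum>b\<in>W. min 2 (m b - 1)) \<le> 2"
proof (cases "card W \<le> 1")
  case True
  have "(\<Sum>b\<in>W. min 2 (m b - 1)) \<le> card W * 2"
    using sum_bounded_above[of W "\<lambda>b. min 2 (m b - 1)" 2] by simp
  with True show ?thesis by simp
next
  case False
  have "(\<Sum>b\<in>W. min 2 (m b - 1)) \<le> (\<Sum>b\<in>W. m b - 1)"
    by (intro sum_mono) simp
  also have "\<dots> = sum m W - card W"
    using assms(2) by (simp add: sum_subtractf_nat Suc_le_eq)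
  finally show ?thesis
    using False assms(3) by linarith
qed

lemma is_CTS_4_weight_through_pair_le:
  assumes CTS: "is_CTS v 4 B" and "x < v" "y < v" "x \<noteq> y"
  shows "(\<Sum>b \<in> {b \<in> set_mset B. x \<in> b \<and> y \<in> b}. min 2 (count B b - 1)) \<le> 2"
proof (rule sum_min_2_pred_le_2)
  have pairs: "\<forall>x<v. \<forall>y<v. x \<noteq> y \<longrightarrow> size (filter_mset (\<lambda>b. {x, y} \<subseteq> b) B) = 4"
    using CTS unfolding is_CTS_def by blast
  have "{b \<in> set_mset B. x \<in> b \<and> y \<in> b} = set_mset (filter_mset (\<lambda>b. {x, y} \<subseteq> b) B)"
    by auto
  then have "sum (count B) {b \<in> set_mset B. x \<in> b \<and> y \<in> b} = size (filter_mset (\<lambda>b. {x, y} \<subseteq> b) B)"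
    by (simp add: size_multiset_overloaded_eq)
  also have "\<dots> = 4"
    by (rule pairs[rule_format]) (use assms(2-4) in auto)
  finally show "sum (count B) {b \<in> set_mset B. x \<in> b \<and> y \<in> b} \<le> 4"
    by simp
qed auto

lemma weighted_blocks_containing_0_le:
  assumes CTS: "is_CTS v 4 B"
  shows "(\<Sum>b \<in> {b \<in> set_mset B. 0 \<in> b}. min 2 (count B b - 1)) \<le> v - 1"
proof -
  define Z where "Z = {b \<in> set_mset B. 0 \<in> b}"
  define w where "w b = min 2 (count B b - 1)" for b
  have "finite Z"
    unfolding Z_def by simp
  have "card {y \<in> {1..<v}. y \<in> b} = 2" if "b \<in> Z" for b
  proof -
    have "b \<subseteq> {..<v}" "card b = 3" "0 \<in> b"
      using CTS that unfolding Z_def is_CTS_def by auto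
    moreover from this have "{y \<in> {1..<v}. y \<in> b} = b - {0}"
      by auto
    ultimately show ?thesis
      by simp
  qed
  then have "(\<Sum>b\<in>Z. 2 * w b) = (\<Sum>b\<in>Z. \<Sum>y\<in>{y \<in> {1..<v}. y \<in> b}. w b)"
    by simp
  also have "\<dots> = (\<Sum>y\<in>{1..<v}. \<Sum>b\<in>{b \<in> Z. y \<in> b}. w b)"
    using sum.swap_restrict[OF \<open>finite Z\<close>, of "{1..<v}" "\<lambda>b y. w b" "\<lambda>b y. y \<in> b"] by simp
  also have "\<dots> \<le> (\<Sum>y\<in>{1..<v}. 2)"
  proof (rule sum_mono)
    fix y assume "y \<in> {1..<v}"
    then show "(\<Sum>b\<in>{b \<in> Z. y \<in> b}. w b) \<le> 2"
      using is_CTS_4_weight_through_pair_le[OF CTS, of 0 y] unfolding Z_def w_def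
      by (simp add: conj_assoc)
  qed
  finally show ?thesis
    unfolding Z_def w_def by (simp flip: sum_distrib_left)
qed

lemma weighted_blocks_containing_0_eq:
  assumes CTS: "is_CTS v 4 B" and cop: "coprime v 3"
  shows "(\<Sum>b \<in> {b \<in> set_mset B. 0 \<in> b}. min 2 (count B b - 1))
    = 3 * (fine_c v B 2 + 2 * fine_c v B 3 + 2 * fine_c v B 4)"
proof -
  define Z where "Z = {b \<in> set_mset B. 0 \<in> b}"
  have "count B ` Z \<subseteq> {1, 2, 3, 4}"
  proof (rule image_subsetI)
    fix b assume "b \<in> Z"
    then have "0 < count B b" "count B b \<le> 4"
      using is_CTS_count_le[OF CTS] unfolding Z_def by auto
    then show "count B b \<in> {1, 2, 3, 4}" by (simp only: insert_iff empty_iff) presburger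
  qed
  then have "(\<Sum>b\<in>Z. min 2 (count B b - 1))
      = (\<Sum>i\<in>{1, 2, 3, 4}. \<Sum>b\<in>{b \<in> Z. count B b = i}. min 2 (count B b - 1))"
    unfolding Z_def by (intro sum.group[symmetric]) auto
  also have "\<dots> = (\<Sum>i\<in>{1, 2, 3, 4}. min 2 (i - 1) * card {b \<in> Z. count B b = i})"
    by (intro sum.cong refl) simp
  also have "\<dots> = (\<Sum>i\<in>{1, 2, 3, 4::nat}. min 2 (i - 1) * (3 * fine_c v B i))"
  proof (intro sum.cong refl)
    fix i :: nat assume "i \<in> {1, 2, 3, 4}"
    then show "min 2 (i - 1) * card {b \<in> Z. count B b = i} = min 2 (i - 1) * (3 * fine_c v B i)"
      using card_blocks_containing_0[OF CTS cop, of i] unfolding Z_def by (auto simp: conj_assoc)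
  qed
  finally show ?thesis
    unfolding Z_def by simp
qed

theorem mainTheorem12:
  fixes v n t s u :: nat and B :: "nat set multiset"
  assumes "v mod 24 = 1 \<or> v mod 24 = 7"
    and "n = (v - 1) div 6"
    and "is_CTS v 4 B"
    and "fine_c v B 2 = t" and "fine_c v B 3 = s" and "fine_c v B 4 = u"
  shows "0 \<le> u \<and> u \<le> n \<and>
         0 \<le> s \<and> int s \<le> int n - int u \<and>
         0 \<le> t \<and> int t \<le> 2 * int n - 2 * int u - 2 * int s"
proof -
  have "v mod 3 = 1" and "(v - 1) mod 6 = 0"
    using assms(1) by presburger+
  then have cop: "coprime v 3" and "v - 1 = 6 * n"
    using coprime_mod_left_iff[of 3 v] assms(2) by (simp, metis add_0 mult.commute mod_div_mult_eq)
  have "3 * (t + 2 * s + 2 * u) = (\<Sum>b \<in> {b \<in> set_mset B. 0 \<in> b}. min 2 (count B b - 1))"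
    using weighted_blocks_containing_0_eq[OF assms(3) cop] unfolding assms(4-6) by (rule sym)
  also have "\<dots> \<le> v - 1"
    by (rule weighted_blocks_containing_0_le[OF assms(3)])
  finally have "t + 2 * s + 2 * u \<le> 2 * n"
    using \<open>v - 1 = 6 * n\<close> by simp
  then show ?thesis
    by linarith
qed

end
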